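(* Let $K_-,K_+>0$ and define, for the two-layered wavenumber $K(X)=K_-$ for $X<0$, $K(X)=K_+$ for $X>0$, the objects $\Lambda^\pm$, $\beta^\pm$, $R^\pm$, $T^\pm$, $\Psi^\pm$ as in the context. Then: (i) for all $(\lambda,X)\in\Lambda^\pm\times\mathbb{R}$, $|\Psi^\pm(\lambda,X)|\le 2$; (ii) with $\mathbb{D}:=\mathbb{C}\setminus(-\infty,-\min(K_-^2,K_+^2)]$, each of the functions $\lambda\mapsto\beta^\pm(\lambda)$, $\lambda\mapsto R^\pm(\lambda)$, $\lambda\mapsto T^\pm(\lambda)$, and $\lambda\mapsto\Psi^\pm(\lambda,X)$ for every fixed $X\in\mathbb{R}$ (each considered on the real interval $(-\min(K_-^2,K_+^2),+\infty)$) has an analytic continuation to $\mathbb{D}$; moreover the analytic continuations of $(\lambda,X)\mapsto\Psi^\pm(\lambda,X)$ are bounded on every compact subset of $\mathbb{D}\times\mathbb{R}$.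
   Context: $\Lambda^\pm:=(-K_\pm^2,+\infty)$. For $\lambda\in\mathbb{R}$, $\beta^\pm(\lambda):=\sqrt{\lambda+K_\pm^2}$ if $\lambda\ge-K_\pm^2$ and $\beta^\pm(\lambda):=i\sqrt{-\lambda-K_\pm^2}$ if $\lambda<-K_\pm^2$. $R^\pm(\lambda):=\frac{\beta^\pm(\lambda)-\beta^\mp(\lambda)}{\beta^+(\lambda)+\beta^-(\lambda)}$, $T^\pm(\lambda):=\frac{2\beta^\pm(\lambda)}{\beta^+(\lambda)+\beta^-(\lambda)}$. For $(\lambda,X)\in\Lambda^\pm\times\mathbb{R}$: $\Psi^\pm(\lambda,X):=e^{\mp i\beta^\pm(\lambda)X}+R^\pm(\lambda)e^{\pm i\beta^\pm(\lambda)X}$ if $\pm X>0$, and $\Psi^\pm(\lambda,X):=T^\pm(\lambda)e^{\mp i\beta^\mp(\lambda)X}$ if $\mp X>0$. *)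

theory Defs
  imports "HOL-Analysis.Analysis"
begin

text \<open>Two-layer setting with wavenumbers Km (for X < 0) and Kp (for X > 0).
  The sign index s :: bool encodes the superscript: True = +, False = -.\<close>

definition Kof :: "real \<Rightarrow> real \<Rightarrow> bool \<Rightarrow> real" where
  "Kof Km Kp s = (if s then Kp else Km)"

definition sgn_of :: "bool \<Rightarrow> real" where
  "sgn_of s = (if s then 1 else -1)"

definition Lambda :: "real \<Rightarrow> real \<Rightarrow> bool \<Rightarrow> real set" where
  "Lambda Km Kp s = {l. - (Kof Km Kp s)\<^sup>2 < l}"

definition beta :: "real \<Rightarrow> real \<Rightarrow> bool \<Rightarrow> real \<Rightarrow> complex" where
  "beta Km Kp s l =
     (if l \<ge> - (Kof Km Kp s)\<^sup>2 then complex_of_real (sqrt (l + (Kof Km Kp s)\<^sup>2))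
      else \<i> * complex_of_real (sqrt (- l - (Kof Km Kp s)\<^sup>2)))"

definition Rcoef :: "real \<Rightarrow> real \<Rightarrow> bool \<Rightarrow> real \<Rightarrow> complex" where
  "Rcoef Km Kp s l =
     (beta Km Kp s l - beta Km Kp (\<not> s) l) / (beta Km Kp True l + beta Km Kp False l)"

definition Tcoef :: "real \<Rightarrow> real \<Rightarrow> bool \<Rightarrow> real \<Rightarrow> complex" where
  "Tcoef Km Kp s l =
     2 * beta Km Kp s l / (beta Km Kp True l + beta Km Kp False l)"

text \<open>Psi^s(lambda,X): for s X > 0 (taken as s X \<ge> 0, the two formulas agree at X = 0
  since 1 + R = T) it is exp(-s i beta^s X) + R^s exp(s i beta^s X); otherwise
  T^s exp(-s i beta^{-s} X).\<close>
definition Psi :: "real \<Rightarrow> real \<Rightarrow> bool \<Rightarrow> real \<Rightarrow> real \<Rightarrow> complex" where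
  "Psi Km Kp s l X =
     (if sgn_of s * X \<ge> 0 then
        exp (- complex_of_real (sgn_of s) * \<i> * beta Km Kp s l * complex_of_real X)
        + Rcoef Km Kp s l * exp (complex_of_real (sgn_of s) * \<i> * beta Km Kp s l * complex_of_real X)
      else
        Tcoef Km Kp s l * exp (- complex_of_real (sgn_of s) * \<i> * beta Km Kp (\<not> s) l * complex_of_real X))"

definition slitD :: "real \<Rightarrow> real \<Rightarrow> complex set" where
  "slitD Km Kp = - {complex_of_real x | x. x \<le> - min (Km\<^sup>2) (Kp\<^sup>2)}"

definition realI :: "real \<Rightarrow> real \<Rightarrow> real set" where
  "realI Km Kp = {l. - min (Km\<^sup>2) (Kp\<^sup>2) < l}"

end

theory Submission
  imports Defs
begin

text \<open>
  On \<open>\<Lambda>\<^sup>\<pm>\<close> the wavenumber \<open>\<beta>\<^sup>\<pm>\<close> is a positive real \<open>a\<close> while \<open>b = \<beta>\<^sup>\<mp>\<close> lies in the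
  closed first quadrant. Hence \<open>|a - b| \<le> |a + b|\<close> and \<open>|a + b| \<ge> a\<close>, so \<open>|R| \<le> 1\<close> and
  \<open>|T| \<le> 2\<close>, while the exponentials have modulus 1, respectively at most 1 because the
  evanescent wave decays away from the interface. For the continuation, \<open>\<beta>\<^sup>\<pm>(\<lambda>)\<close> is the
  principal square root of \<open>\<lambda> + K\<^sub>\<pm>\<^sup>2\<close>, holomorphic off the slit, with positive real part
  there; so \<open>\<beta>\<^sup>+ + \<beta>\<^sup>-\<close> does not vanish, and \<open>R\<close>, \<open>T\<close>, \<open>\<Psi>\<close> continue analytically. Each
  branch of \<open>\<Psi>\<close> is jointly continuous in \<open>(\<lambda>, X)\<close>, which gives the bound on compacta.
  None of this needs \<open>K\<^sub>\<pm> > 0\<close>.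
\<close>

lemma cmod_diff_le_cmod_add:
  fixes a :: real and b :: complex
  assumes "0 \<le> a" "0 \<le> Re b"
  shows "cmod (of_real a - b) \<le> cmod (of_real a + b)"
proof -
  have "(a - Re b)\<^sup>2 + (Im b)\<^sup>2 \<le> (a + Re b)\<^sup>2 + (Im b)\<^sup>2"
    using assms by (simp add: power2_eq_square algebra_simps)
  then show ?thesis by (simp add: cmod_def)
qed

lemma cmod_add_ge:
  fixes a :: real and b :: complex
  assumes "0 \<le> Re b"
  shows "a \<le> cmod (of_real a + b)"
  using complex_Re_le_cmod[of "of_real a + b"] assms by simp

lemma cmod_reflection_le_1:
  fixes a :: real and b :: complex
  assumes "0 < a" "0 \<le> Re b"
  shows "cmod ((of_real a - b) / (of_real a + b)) \<le> 1"
  using cmod_diff_le_cmod_add[of a b] cmod_add_ge[of b a] assms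
  by (simp add: norm_divide divide_le_eq_1)

lemma cmod_transmission_le_2:
  fixes a :: real and b :: complex
  assumes "0 < a" "0 \<le> Re b"
  shows "cmod (2 * of_real a / (of_real a + b)) \<le> 2"
  using cmod_add_ge[of b a] assms by (simp add: norm_divide divide_le_eq)

lemma beta_nonneg:
  shows "0 \<le> Re (beta Km Kp s l)" "0 \<le> Im (beta Km Kp s l)"
  by (auto simp: beta_def)

lemma beta_on_Lambda:
  assumes "l \<in> Lambda Km Kp s"
  shows "beta Km Kp s l = of_real (sqrt (l + (Kof Km Kp s)\<^sup>2))"
    and "0 < sqrt (l + (Kof Km Kp s)\<^sup>2)"
  using assms by (auto simp: beta_def Lambda_def)

lemma beta_add_commute:
  "beta Km Kp True l + beta Km Kp False l = beta Km Kp s l + beta Km Kp (\<not> s) l"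
  by (cases s) (simp_all add: add.commute)

lemma cmod_Psi_le_2:
  assumes "l \<in> Lambda Km Kp s"
  shows "cmod (Psi Km Kp s l X) \<le> 2"
proof -
  define a where "a = sqrt (l + (Kof Km Kp s)\<^sup>2)"
  define b where "b = beta Km Kp (\<not> s) l"
  define \<sigma> where "\<sigma> = sgn_of s"
  have beta_a: "beta Km Kp s l = of_real a" and "0 < a"
    using beta_on_Lambda[OF assms] by (simp_all add: a_def)
  have "0 \<le> Re b" "0 \<le> Im b"
    using beta_nonneg by (simp_all add: b_def)
  have R: "Rcoef Km Kp s l = (of_real a - b) / (of_real a + b)"
    unfolding Rcoef_def beta_add_commute[of Km Kp l s] beta_a b_def ..
  have T: "Tcoef Km Kp s l = 2 * of_real a / (of_real a + b)"
    unfolding Tcoef_def beta_add_commute[of Km Kp l s] beta_a b_def ..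
  show ?thesis
  proof (cases "\<sigma> * X \<ge> 0")
    case True
    define r where "r = (of_real a - b) / (of_real a + b)"
    have "Psi Km Kp s l X = exp (- of_real \<sigma> * \<i> * of_real a * of_real X)
        + r * exp (of_real \<sigma> * \<i> * of_real a * of_real X)"
      using True unfolding Psi_def R beta_a \<sigma>_def r_def by simp
    also have "cmod \<dots> \<le> 1 + cmod r"
      by (rule order_trans[OF norm_triangle_ineq]) (simp add: norm_mult)
    also have "\<dots> \<le> 2"
      using cmod_reflection_le_1[OF \<open>0 < a\<close> \<open>0 \<le> Re b\<close>] by (simp add: r_def)
    finally show ?thesis .
  next
    case False
    have "Re (- of_real \<sigma> * \<i> * b * of_real X) = \<sigma> * X * Im b"
      by simp
    also have "\<dots> \<le> 0"
      using False \<open>0 \<le> Im b\<close> by (simp add: mult_nonpos_nonneg)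
    finally have decay: "cmod (exp (- of_real \<sigma> * \<i> * b * of_real X)) \<le> 1"
      by simp
    have "cmod (Psi Km Kp s l X)
        = cmod (2 * of_real a / (of_real a + b)) * cmod (exp (- of_real \<sigma> * \<i> * b * of_real X))"
      using False unfolding Psi_def T b_def \<sigma>_def by (simp only: if_False norm_mult)
    also have "\<dots> \<le> 2 * 1"
      using cmod_transmission_le_2[OF \<open>0 < a\<close> \<open>0 \<le> Re b\<close>] decay
      by (intro mult_mono) auto
    finally show ?thesis by simp
  qed
qed

definition beta_ext :: "real \<Rightarrow> real \<Rightarrow> bool \<Rightarrow> complex \<Rightarrow> complex" where
  "beta_ext Km Kp s z = csqrt (z + of_real ((Kof Km Kp s)\<^sup>2))"

definition Rcoef_ext :: "real \<Rightarrow> real \<Rightarrow> bool \<Rightarrow> complex \<Rightarrow> complex" where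
  "Rcoef_ext Km Kp s z =
     (beta_ext Km Kp s z - beta_ext Km Kp (\<not> s) z) / (beta_ext Km Kp True z + beta_ext Km Kp False z)"

definition Tcoef_ext :: "real \<Rightarrow> real \<Rightarrow> bool \<Rightarrow> complex \<Rightarrow> complex" where
  "Tcoef_ext Km Kp s z =
     2 * beta_ext Km Kp s z / (beta_ext Km Kp True z + beta_ext Km Kp False z)"

definition Psi_ext :: "real \<Rightarrow> real \<Rightarrow> bool \<Rightarrow> complex \<Rightarrow> real \<Rightarrow> complex" where
  "Psi_ext Km Kp s z X =
     (if sgn_of s * X \<ge> 0 then
        exp (- complex_of_real (sgn_of s) * \<i> * beta_ext Km Kp s z * complex_of_real X)
        + Rcoef_ext Km Kp s z * exp (complex_of_real (sgn_of s) * \<i> * beta_ext Km Kp s z * complex_of_real X)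
      else
        Tcoef_ext Km Kp s z * exp (- complex_of_real (sgn_of s) * \<i> * beta_ext Km Kp (\<not> s) z * complex_of_real X))"

lemma Re_csqrt_pos:
  assumes "w \<notin> \<real>\<^sub>\<le>\<^sub>0"
  shows "0 < Re (csqrt w)"
proof (rule ccontr)
  define y where "y = Im (csqrt w)"
  assume "\<not> 0 < Re (csqrt w)"
  then have "csqrt w = \<i> * of_real y"
    using Re_csqrt[of w] by (simp add: complex_eq_iff y_def)
  then have "w = of_real (- y\<^sup>2)"
    by (metis power2_csqrt power_mult_distrib power2_i of_real_power mult_minus1 of_real_minus)
  then show False
    using assms by (simp add: complex_nonpos_Reals_iff)
qed

lemma slitD_shift_not_nonpos_Reals:
  assumes "z \<in> slitD Km Kp"
  shows "z + of_real ((Kof Km Kp s)\<^sup>2) \<notin> \<real>\<^sub>\<le>\<^sub>0"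
proof
  assume "z + of_real ((Kof Km Kp s)\<^sup>2) \<in> \<real>\<^sub>\<le>\<^sub>0"
  then have "Im z = 0" "Re z + (Kof Km Kp s)\<^sup>2 \<le> 0"
    by (auto simp: complex_nonpos_Reals_iff)
  moreover from this have "Re z \<le> - min (Km\<^sup>2) (Kp\<^sup>2)"
    by (cases s) (auto simp: Kof_def)
  ultimately show False
    using assms complex_is_Real_iff unfolding slitD_def by force
qed

lemma Re_beta_ext_pos:
  assumes "z \<in> slitD Km Kp"
  shows "0 < Re (beta_ext Km Kp s z)"
  unfolding beta_ext_def by (rule Re_csqrt_pos[OF slitD_shift_not_nonpos_Reals[OF assms]])

lemma beta_ext_add_nonzero:
  assumes "z \<in> slitD Km Kp"
  shows "beta_ext Km Kp True z + beta_ext Km Kp False z \<noteq> 0"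
proof -
  have "0 < Re (beta_ext Km Kp True z + beta_ext Km Kp False z)"
    using Re_beta_ext_pos[OF assms] by (simp add: add_pos_pos)
  then show ?thesis by (metis less_irrefl zero_complex.sel(1))
qed

lemma beta_ext_of_real:
  assumes "l \<in> realI Km Kp"
  shows "beta_ext Km Kp s (of_real l) = beta Km Kp s l"
proof -
  have "min (Km\<^sup>2) (Kp\<^sup>2) \<le> (Kof Km Kp s)\<^sup>2"
    by (cases s) (auto simp: Kof_def)
  then have "0 < l + (Kof Km Kp s)\<^sup>2"
    using assms by (auto simp: realI_def)
  then show ?thesis
    by (simp add: beta_ext_def beta_def flip: of_real_add)
qed

lemma Rcoef_ext_of_real: "l \<in> realI Km Kp \<Longrightarrow> Rcoef_ext Km Kp s (of_real l) = Rcoef Km Kp s l"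
  by (simp add: Rcoef_ext_def Rcoef_def beta_ext_of_real)

lemma Tcoef_ext_of_real: "l \<in> realI Km Kp \<Longrightarrow> Tcoef_ext Km Kp s (of_real l) = Tcoef Km Kp s l"
  by (simp add: Tcoef_ext_def Tcoef_def beta_ext_of_real)

lemma Psi_ext_of_real: "l \<in> realI Km Kp \<Longrightarrow> Psi_ext Km Kp s (of_real l) X = Psi Km Kp s l X"
  by (simp add: Psi_ext_def Psi_def beta_ext_of_real Rcoef_ext_of_real Tcoef_ext_of_real)

lemma analytic_on_beta_ext: "beta_ext Km Kp s analytic_on slitD Km Kp"
  unfolding beta_ext_def
  by (intro analytic_intros) (use slitD_shift_not_nonpos_Reals in auto)

lemma analytic_on_Rcoef_ext: "Rcoef_ext Km Kp s analytic_on slitD Km Kp"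
  unfolding Rcoef_ext_def
  by (intro analytic_intros analytic_on_beta_ext) (use beta_ext_add_nonzero in auto)

lemma analytic_on_Tcoef_ext: "Tcoef_ext Km Kp s analytic_on slitD Km Kp"
  unfolding Tcoef_ext_def
  by (intro analytic_intros analytic_on_beta_ext) (use beta_ext_add_nonzero in auto)

lemma analytic_on_Psi_ext: "(\<lambda>z. Psi_ext Km Kp s z X) analytic_on slitD Km Kp"
  unfolding Psi_ext_def
  by (cases "sgn_of s * X \<ge> 0")
    (auto intro!: analytic_intros analytic_on_beta_ext analytic_on_Rcoef_ext analytic_on_Tcoef_ext)

lemma bounded_image_if:
  assumes "compact C" "continuous_on C f" "continuous_on C g"
  shows "bounded ((\<lambda>x. if P x then f x else g x) ` C)"
proof (rule bounded_subset)
  show "bounded (f ` C \<union> g ` C)"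
    using assms by (simp add: compact_continuous_image compact_imp_bounded)
qed auto

lemma continuous_on_beta_ext_fst:
  assumes "C \<subseteq> slitD Km Kp \<times> UNIV"
  shows "continuous_on C (\<lambda>p. beta_ext Km Kp s (fst p))"
  using assms
  by (intro continuous_on_compose2[OF holomorphic_on_imp_continuous_on[OF
        analytic_imp_holomorphic[OF analytic_on_beta_ext]] continuous_on_fst[OF continuous_on_id]])
    auto

lemma bounded_Psi_ext_image:
  assumes "compact C" "C \<subseteq> slitD Km Kp \<times> UNIV"
  shows "bounded ((\<lambda>(z, X). Psi_ext Km Kp s z X) ` C)"
proof -
  have "\<forall>p\<in>C. beta_ext Km Kp True (fst p) + beta_ext Km Kp False (fst p) \<noteq> 0"
    using assms(2) beta_ext_add_nonzero by auto
  then show ?thesis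
    unfolding Psi_ext_def Rcoef_ext_def Tcoef_ext_def case_prod_beta
    using assms
    by (intro bounded_image_if continuous_intros continuous_on_beta_ext_fst) auto
qed

theorem proposition2p1:
  fixes Km Kp :: real
  assumes "Km > 0" and "Kp > 0"
  shows "\<forall>s :: bool.
     (\<forall>l \<in> Lambda Km Kp s. \<forall>X :: real. cmod (Psi Km Kp s l X) \<le> 2)
   \<and> (\<exists>g. g analytic_on slitD Km Kp \<and>
          (\<forall>l \<in> realI Km Kp. g (complex_of_real l) = beta Km Kp s l))
   \<and> (\<exists>g. g analytic_on slitD Km Kp \<and>
          (\<forall>l \<in> realI Km Kp. g (complex_of_real l) = Rcoef Km Kp s l))
   \<and> (\<exists>g. g analytic_on slitD Km Kp \<and>
          (\<forall>l \<in> realI Km Kp. g (complex_of_real l) = Tcoef Km Kp s l))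
   \<and> (\<exists>G :: complex \<Rightarrow> real \<Rightarrow> complex.
          (\<forall>X :: real. (\<lambda>z. G z X) analytic_on slitD Km Kp \<and>
             (\<forall>l \<in> realI Km Kp. G (complex_of_real l) X = Psi Km Kp s l X))
        \<and> (\<forall>C :: (complex \<times> real) set. compact C \<and> C \<subseteq> slitD Km Kp \<times> UNIV
              \<longrightarrow> bounded ((\<lambda>(z, X). G z X) ` C)))"
proof (intro allI conjI)
  fix s
  show "\<forall>l \<in> Lambda Km Kp s. \<forall>X. cmod (Psi Km Kp s l X) \<le> 2"
    using cmod_Psi_le_2 by blast
  show "\<exists>g. g analytic_on slitD Km Kp \<and> (\<forall>l \<in> realI Km Kp. g (of_real l) = beta Km Kp s l)"
    using analytic_on_beta_ext beta_ext_of_real by blast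
  show "\<exists>g. g analytic_on slitD Km Kp \<and> (\<forall>l \<in> realI Km Kp. g (of_real l) = Rcoef Km Kp s l)"
    using analytic_on_Rcoef_ext Rcoef_ext_of_real by blast
  show "\<exists>g. g analytic_on slitD Km Kp \<and> (\<forall>l \<in> realI Km Kp. g (of_real l) = Tcoef Km Kp s l)"
    using analytic_on_Tcoef_ext Tcoef_ext_of_real by blast
  show "\<exists>G. (\<forall>X. (\<lambda>z. G z X) analytic_on slitD Km Kp \<and>
                 (\<forall>l \<in> realI Km Kp. G (of_real l) X = Psi Km Kp s l X))
          \<and> (\<forall>C. compact C \<and> C \<subseteq> slitD Km Kp \<times> UNIV \<longrightarrow> bounded ((\<lambda>(z, X). G z X) ` C))"
    using analytic_on_Psi_ext Psi_ext_of_real bounded_Psi_ext_image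
    by (intro exI[of _ "Psi_ext Km Kp s"]) blast
qed

end
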